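(* A connected graph $G$ contains none of $P_5$, $C_4$, $C_5$, the claw, the bull as an induced subgraph if and only if $G$ is a co-chain graph.
   Context: All graphs are finite and simple. A graph $G$ is a co-chain graph if its vertex set can be partitioned into two cliques $X$ and $Y$ such that the vertices of $X$ can be ordered $x_1,\dots,x_{|X|}$ with $N[x_i]\subseteq N[x_j]$ for all $1\le i<j\le |X|$ (closed neighborhoods). $P_n$, $C_n$ denote the path and cycle on $n$ vertices; the claw is $K_{1,3}$; the bull is the $5$-vertex graph consisting of a triangle with two pendant edges attached at two distinct triangle vertices. *)

theory Defs
  imports Main
begin

definition graph :: "'a set \<Rightarrow> ('a \<Rightarrow> 'a \<Rightarrow> bool) \<Rightarrow> bool" where
  "graph V E \<longleftrightarrow> finite V \<and> (\<forall>x y. E x y \<longrightarrow> E y x) \<and> (\<forall>x. \<not> E x x)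
     \<and> (\<forall>x y. E x y \<longrightarrow> x \<in> V \<and> y \<in> V)"

definition connected_graph :: "'a set \<Rightarrow> ('a \<Rightarrow> 'a \<Rightarrow> bool) \<Rightarrow> bool" where
  "connected_graph V E \<longleftrightarrow> V \<noteq> {} \<and> (\<forall>x\<in>V. \<forall>y\<in>V. E\<^sup>*\<^sup>* x y)"

definition has_induced :: "'a set \<Rightarrow> ('a \<Rightarrow> 'a \<Rightarrow> bool) \<Rightarrow> nat \<Rightarrow> (nat \<Rightarrow> nat \<Rightarrow> bool) \<Rightarrow> bool" where
  "has_induced V E n F \<longleftrightarrow> (\<exists>f. inj_on f {..<n} \<and> f ` {..<n} \<subseteq> V \<and>
      (\<forall>i<n. \<forall>j<n. E (f i) (f j) \<longleftrightarrow> F i j))"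

definition P5_edge :: "nat \<Rightarrow> nat \<Rightarrow> bool" where
  "P5_edge i j \<longleftrightarrow> i = j + 1 \<or> j = i + 1"

definition C4_edge :: "nat \<Rightarrow> nat \<Rightarrow> bool" where
  "C4_edge i j \<longleftrightarrow> i = j + 1 \<or> j = i + 1 \<or> {i, j} = {0, 3}"

definition C5_edge :: "nat \<Rightarrow> nat \<Rightarrow> bool" where
  "C5_edge i j \<longleftrightarrow> i = j + 1 \<or> j = i + 1 \<or> {i, j} = {0, 4}"

definition claw_edge :: "nat \<Rightarrow> nat \<Rightarrow> bool" where
  "claw_edge i j \<longleftrightarrow> i \<noteq> j \<and> (i = 0 \<or> j = 0)"

definition bull_edge :: "nat \<Rightarrow> nat \<Rightarrow> bool" where
  "bull_edge i j \<longleftrightarrow> {i, j} = {0, 1} \<or> {i, j} = {1, 2} \<or> {i, j} = {0, 2}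
      \<or> {i, j} = {0, 3} \<or> {i, j} = {1, 4}"

definition closed_nbhd :: "'a set \<Rightarrow> ('a \<Rightarrow> 'a \<Rightarrow> bool) \<Rightarrow> 'a \<Rightarrow> 'a set" where
  "closed_nbhd V E x = insert x {y \<in> V. E x y}"

definition is_clique :: "('a \<Rightarrow> 'a \<Rightarrow> bool) \<Rightarrow> 'a set \<Rightarrow> bool" where
  "is_clique E S \<longleftrightarrow> (\<forall>x\<in>S. \<forall>y\<in>S. x \<noteq> y \<longrightarrow> E x y)"

definition co_chain :: "'a set \<Rightarrow> ('a \<Rightarrow> 'a \<Rightarrow> bool) \<Rightarrow> bool" where
  "co_chain V E \<longleftrightarrow> (\<exists>X Y. X \<union> Y = V \<and> X \<inter> Y = {} \<and> is_clique E X \<and> is_clique E Y \<and>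
     (\<exists>xs. distinct xs \<and> set xs = X \<and>
        (\<forall>i j. i < j \<and> j < length xs \<longrightarrow>
            closed_nbhd V E (xs ! i) \<subseteq> closed_nbhd V E (xs ! j))))"

end

theory Submission
  imports Defs
begin

text \<open>If V is covered by two cliques X and Y, non-adjacent vertices lie on opposite sides. Hence
there is no independent triple, which excludes P5, the claw and the bull; the non-edges of C5 form an
odd cycle, which cannot alternate between two sides; and an induced C4 has a cycle edge inside X
whose ends have incomparable closed neighbourhoods.

Conversely, let G be connected and free of P5, C4, claw and bull. Walking along a path between two
members of an independent triple yields an independent triple a, b, c together with a common
neighbour w of a and b. Then c is anticomplete to the induced path a w b, each step of a path
starting at c preserves this (any other attachment creates a forbidden subgraph), so c cannot reach
w. Without independent triples, let u have the most non-neighbours: these form a clique Y, and the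
closed neighbourhood X of u is a clique as well, since two non-adjacent x, x' in X would each have a
neighbour in Y (by maximality), every vertex of Y sees exactly one of them (C4, independent
triple), and so u, x, y, y', x' would induce a C5. Excluding C4 makes the closed neighbourhoods in X
a chain, which is listed in order of cardinality.\<close>

lemma obtain_induced_copy:
  assumes "has_induced V E n F"
  obtains f where "\<And>i. i < n \<Longrightarrow> f i \<in> V"
    and "\<And>i j. i < n \<Longrightarrow> j < n \<Longrightarrow> f i = f j \<Longrightarrow> i = j"
    and "\<And>i j. i < n \<Longrightarrow> j < n \<Longrightarrow> E (f i) (f j) \<longleftrightarrow> F i j"
proof -
  from assms obtain f where "inj_on f {..<n}" and "f ` {..<n} \<subseteq> V"
    and "\<forall>i<n. \<forall>j<n. E (f i) (f j) \<longleftrightarrow> F i j"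
    unfolding has_induced_def by blast
  then show thesis
    by (intro that[of f]) (auto simp: inj_on_def)
qed

lemma has_induced_of_list:
  assumes "distinct vs" and "set vs \<subseteq> V" and "length vs = n"
    and "\<forall>i<n. \<forall>j<n. E (vs ! i) (vs ! j) \<longleftrightarrow> F i j"
  shows "has_induced V E n F"
  unfolding has_induced_def
proof (intro exI conjI)
  show "inj_on ((!) vs) {..<n}"
    using assms(1,3) by (auto intro: inj_on_nth)
  show "(!) vs ` {..<n} \<subseteq> V"
    using assms(2,3) by auto
qed (use assms(4) in simp)

definition independent_triple :: "'a set \<Rightarrow> ('a \<Rightarrow> 'a \<Rightarrow> bool) \<Rightarrow> 'a \<Rightarrow> 'a \<Rightarrow> 'a \<Rightarrow> bool" where
  "independent_triple V E a b c \<longleftrightarrow> a \<in> V \<and> b \<in> V \<and> c \<in> V \<and> a \<noteq> b \<and> a \<noteq> c \<and> b \<noteq> c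
     \<and> \<not> E a b \<and> \<not> E a c \<and> \<not> E b c"

lemma has_induced_independent_triple:
  assumes "has_induced V E n F" and "i < n" "j < n" "k < n" and "i \<noteq> j" "i \<noteq> k" "j \<noteq> k"
    and "\<not> F i j" "\<not> F i k" "\<not> F j k"
  shows "\<exists>a b c. independent_triple V E a b c"
proof -
  obtain f where f_V: "\<And>i. i < n \<Longrightarrow> f i \<in> V"
    and f_inj: "\<And>i j. i < n \<Longrightarrow> j < n \<Longrightarrow> f i = f j \<Longrightarrow> i = j"
    and f_E: "\<And>i j. i < n \<Longrightarrow> j < n \<Longrightarrow> E (f i) (f j) \<longleftrightarrow> F i j"
    using assms(1) by (rule obtain_induced_copy) (rule that)
  have "independent_triple V E (f i) (f j) (f k)"
    using assms(2-) f_V f_E f_inj unfolding independent_triple_def by meson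
  then show ?thesis by blast
qed

lemma induced_P5_independent_triple:
  "has_induced V E 5 P5_edge \<Longrightarrow> \<exists>a b c. independent_triple V E a b c"
  by (erule has_induced_independent_triple[of _ _ _ _ 0 2 4]) (simp_all add: P5_edge_def)

lemma induced_claw_independent_triple:
  "has_induced V E 4 claw_edge \<Longrightarrow> \<exists>a b c. independent_triple V E a b c"
  by (erule has_induced_independent_triple[of _ _ _ _ 1 2 3]) (simp_all add: claw_edge_def)

lemma induced_bull_independent_triple:
  "has_induced V E 5 bull_edge \<Longrightarrow> \<exists>a b c. independent_triple V E a b c"
  by (erule has_induced_independent_triple[of _ _ _ _ 2 3 4])
    (simp_all add: bull_edge_def doubleton_eq_iff)

lemma two_cliques_separate_non_adjacent:
  assumes "X \<union> Y = V" and "is_clique E X" and "is_clique E Y"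
    and "p \<in> V" "q \<in> V" "p \<noteq> q" "\<not> E p q"
  shows "p \<in> X \<longleftrightarrow> q \<notin> X"
  using assms unfolding is_clique_def by blast

lemma two_cliques_no_independent_triple:
  assumes "X \<union> Y = V" and "is_clique E X" and "is_clique E Y"
  shows "\<not> independent_triple V E a b c"
  using two_cliques_separate_non_adjacent[OF assms] unfolding independent_triple_def by blast

lemma two_cliques_no_induced_C5:
  assumes "X \<union> Y = V" and "is_clique E X" and "is_clique E Y"
  shows "\<not> has_induced V E 5 C5_edge"
proof
  assume "has_induced V E 5 C5_edge"
  then obtain f where f_V: "\<And>i. i < 5 \<Longrightarrow> f i \<in> V"
    and f_inj: "\<And>i j. i < 5 \<Longrightarrow> j < 5 \<Longrightarrow> f i = f j \<Longrightarrow> i = j"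
    and f_E: "\<And>i j. i < 5 \<Longrightarrow> j < 5 \<Longrightarrow> E (f i) (f j) \<longleftrightarrow> C5_edge i j"
    by (rule obtain_induced_copy) (rule that)
  have side: "f i \<in> X \<longleftrightarrow> f j \<notin> X" if "i < 5" "j < 5" "i \<noteq> j" "\<not> C5_edge i j" for i j
    using two_cliques_separate_non_adjacent[OF assms f_V f_V] f_inj f_E that by blast
  \<comment> \<open>the non-edges 0-2-4-1-3-0 of C5 form an odd cycle\<close>
  show False
    using side[of 0 2] side[of 2 4] side[of 4 1] side[of 1 3] side[of 3 0]
    by (simp add: C5_edge_def doubleton_eq_iff)
qed

lemma chain_closed_nbhds_no_induced_C4:
  assumes "X \<union> Y = V" and "is_clique E X" and "is_clique E Y"
    and comparable: "chain\<^sub>\<subseteq> (closed_nbhd V E ` X)"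
  shows "\<not> has_induced V E 4 C4_edge"
proof
  assume "has_induced V E 4 C4_edge"
  then obtain f where f_V: "\<And>i. i < 4 \<Longrightarrow> f i \<in> V"
    and f_inj: "\<And>i j. i < 4 \<Longrightarrow> j < 4 \<Longrightarrow> f i = f j \<Longrightarrow> i = j"
    and f_E: "\<And>i j. i < 4 \<Longrightarrow> j < 4 \<Longrightarrow> E (f i) (f j) \<longleftrightarrow> C4_edge i j"
    by (rule obtain_induced_copy) (rule that)
  have side: "f i \<in> X \<longleftrightarrow> f j \<notin> X" if "i < 4" "j < 4" "i \<noteq> j" "\<not> C4_edge i j" for i j
    using two_cliques_separate_non_adjacent[OF assms(1-3) f_V f_V] f_inj f_E that by blast
  have not_both: "\<not> (f i \<in> X \<and> f j \<in> X)"
    if "i < 4" "j < 4" "k < 4" "l < 4" "j \<noteq> k" "i \<noteq> l"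
      "C4_edge i k" "\<not> C4_edge j k" "C4_edge j l" "\<not> C4_edge i l" for i j k l
  proof
    assume "f i \<in> X \<and> f j \<in> X"
    moreover have "f k \<in> closed_nbhd V E (f i) - closed_nbhd V E (f j)"
      using that f_V f_inj f_E by (auto simp: closed_nbhd_def)
    moreover have "f l \<in> closed_nbhd V E (f j) - closed_nbhd V E (f i)"
      using that f_V f_inj f_E by (auto simp: closed_nbhd_def)
    ultimately show False
      using comparable unfolding chain_subset_def by blast
  qed
  show False
    using side[of 0 2] side[of 1 3] not_both[of 0 1 3 2] not_both[of 1 2 0 3]
      not_both[of 2 3 1 0] not_both[of 3 0 2 1]
    by (auto simp: C4_edge_def doubleton_eq_iff)
qed

lemma co_chainE:
  assumes "co_chain V E"
  obtains X Y where "X \<union> Y = V" and "is_clique E X" and "is_clique E Y"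
    and "chain\<^sub>\<subseteq> (closed_nbhd V E ` X)"
proof -
  obtain X Y xs where XY: "X \<union> Y = V" "is_clique E X" "is_clique E Y"
    and xs: "set xs = X"
      "\<forall>i j. i < j \<and> j < length xs \<longrightarrow> closed_nbhd V E (xs ! i) \<subseteq> closed_nbhd V E (xs ! j)"
    using assms unfolding co_chain_def by blast
  have "closed_nbhd V E (xs ! i) \<subseteq> closed_nbhd V E (xs ! j) \<or>
      closed_nbhd V E (xs ! j) \<subseteq> closed_nbhd V E (xs ! i)"
    if "i < length xs" "j < length xs" for i j
    using xs(2) that by (cases i j rule: linorder_cases) auto
  then have "closed_nbhd V E a \<subseteq> closed_nbhd V E b \<or> closed_nbhd V E b \<subseteq> closed_nbhd V E a"
    if "a \<in> X" "b \<in> X" for a b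
    using that xs(1) by (metis in_set_conv_nth)
  then show thesis
    using that[OF XY] unfolding chain_subset_def by blast
qed

lemma co_chain_forbidden_free:
  assumes "co_chain V E"
  shows "\<not> has_induced V E 5 P5_edge \<and> \<not> has_induced V E 4 C4_edge \<and>
    \<not> has_induced V E 5 C5_edge \<and> \<not> has_induced V E 4 claw_edge \<and>
    \<not> has_induced V E 5 bull_edge"
proof -
  obtain X Y where cliques: "X \<union> Y = V" "is_clique E X" "is_clique E Y"
    and comparable: "chain\<^sub>\<subseteq> (closed_nbhd V E ` X)"
    using assms by (rule co_chainE)
  show ?thesis
    using two_cliques_no_independent_triple[OF cliques] two_cliques_no_induced_C5[OF cliques]
      chain_closed_nbhds_no_induced_C4[OF cliques comparable]
      induced_P5_independent_triple induced_claw_independent_triple induced_bull_independent_triple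
    by blast
qed

lemma chain_sorted_by_inclusion:
  assumes "finite X" and "\<And>a. finite (N a)" and "chain\<^sub>\<subseteq> (N ` X)"
  obtains xs where "distinct xs" and "set xs = X"
    and "\<forall>i j. i < j \<and> j < length xs \<longrightarrow> N (xs ! i) \<subseteq> N (xs ! j)"
proof -
  obtain ys where ys: "set ys = X" "distinct ys"
    using finite_distinct_list[OF assms(1)] by blast
  define xs where "xs = sort_key (\<lambda>a. card (N a)) ys"
  have set_xs: "set xs = X" and "distinct xs"
    using ys by (simp_all add: xs_def)
  have sorted: "sorted (map (\<lambda>a. card (N a)) xs)"
    by (simp add: xs_def)
  have "N (xs ! i) \<subseteq> N (xs ! j)" if "i < j" "j < length xs" for i j
  proof -
    have "card (N (xs ! i)) \<le> card (N (xs ! j))"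
      using sorted_nth_mono[OF sorted, of i j] that by simp
    moreover have "N (xs ! i) \<subseteq> N (xs ! j) \<or> N (xs ! j) \<subseteq> N (xs ! i)"
      using assms(3) set_xs that unfolding chain_subset_def by (meson image_eqI nth_mem order.strict_trans)
    ultimately show ?thesis
      using card_seteq[OF assms(2)] by blast
  qed
  then show thesis
    using that \<open>distinct xs\<close> set_xs by blast
qed

lemma co_chainI:
  assumes "finite V" and "X \<union> Y = V" and "X \<inter> Y = {}" and "is_clique E X" and "is_clique E Y"
    and "chain\<^sub>\<subseteq> (closed_nbhd V E ` X)"
  shows "co_chain V E"
proof -
  have "finite X" "\<And>a. finite (closed_nbhd V E a)"
    using assms(1,2) by (auto simp: closed_nbhd_def)
  then obtain xs where "distinct xs" "set xs = X"
    "\<forall>i j. i < j \<and> j < length xs \<longrightarrow> closed_nbhd V E (xs ! i) \<subseteq> closed_nbhd V E (xs ! j)"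
    using assms(6) by (rule chain_sorted_by_inclusion) (rule that)
  then show ?thesis
    unfolding co_chain_def using assms(2-5) by blast
qed

locale finite_simple_graph =
  fixes V :: "'a set" and E :: "'a \<Rightarrow> 'a \<Rightarrow> bool"
  assumes graph: "graph V E"
begin

lemma edge_sym: "E x y \<longleftrightarrow> E y x"
  using graph unfolding graph_def by blast

lemma no_loop: "\<not> E x x"
  using graph unfolding graph_def by blast

lemma edge_in_V:
  assumes "E x y"
  shows "x \<in> V" and "y \<in> V"
  using assms graph unfolding graph_def by blast+

lemma finite_V: "finite V"
  using graph unfolding graph_def by blast

lemma induced_P5I:
  assumes "a \<in> V" "b \<in> V" "c \<in> V" "d \<in> V" "e \<in> V"
    and "E a b" "E b c" "E c d" "E d e"
    and "\<not> E a c" "\<not> E a d" "\<not> E a e" "\<not> E b d" "\<not> E b e" "\<not> E c e"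
  shows "has_induced V E 5 P5_edge"
  by (rule has_induced_of_list[of "[a, b, c, d, e]"])
    (use assms in \<open>auto simp: less_Suc_eq numeral_eq_Suc P5_edge_def edge_sym no_loop\<close>)

lemma induced_C4I:
  assumes "a \<in> V" "b \<in> V" "c \<in> V" "d \<in> V" and "a \<noteq> c" "b \<noteq> d"
    and "E a b" "E b c" "E c d" "E d a" and "\<not> E a c" "\<not> E b d"
  shows "has_induced V E 4 C4_edge"
  by (rule has_induced_of_list[of "[a, b, c, d]"])
    (use assms in \<open>auto simp: less_Suc_eq numeral_eq_Suc C4_edge_def doubleton_eq_iff edge_sym no_loop\<close>)

lemma induced_C5I:
  assumes "a \<in> V" "b \<in> V" "c \<in> V" "d \<in> V" "e \<in> V"
    and "E a b" "E b c" "E c d" "E d e" "E e a"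
    and "\<not> E a c" "\<not> E a d" "\<not> E b d" "\<not> E b e" "\<not> E c e"
  shows "has_induced V E 5 C5_edge"
  by (rule has_induced_of_list[of "[a, b, c, d, e]"])
    (use assms in \<open>auto simp: less_Suc_eq numeral_eq_Suc C5_edge_def doubleton_eq_iff edge_sym no_loop\<close>)

lemma induced_clawI:
  assumes "a \<in> V" "b \<in> V" "c \<in> V" "d \<in> V" and "b \<noteq> c" "b \<noteq> d" "c \<noteq> d"
    and "E a b" "E a c" "E a d" and "\<not> E b c" "\<not> E b d" "\<not> E c d"
  shows "has_induced V E 4 claw_edge"
  by (rule has_induced_of_list[of "[a, b, c, d]"])
    (use assms in \<open>auto simp: less_Suc_eq numeral_eq_Suc claw_edge_def edge_sym no_loop\<close>)

lemma induced_bullI: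
  assumes "a \<in> V" "b \<in> V" "c \<in> V" "d \<in> V" "e \<in> V"
    and "E a b" "E b c" "E a c" "E a d" "E b e"
    and "\<not> E a e" "\<not> E b d" "\<not> E c d" "\<not> E c e" "\<not> E d e"
  shows "has_induced V E 5 bull_edge"
  by (rule has_induced_of_list[of "[a, b, c, d, e]"])
    (use assms in \<open>auto simp: less_Suc_eq numeral_eq_Suc bull_edge_def doubleton_eq_iff edge_sym no_loop\<close>)

lemma independent_triple_with_common_neighbour:
  assumes "E\<^sup>*\<^sup>* a b" and "independent_triple V E a b c"
  shows "\<exists>a' b' c' w. independent_triple V E a' b' c' \<and> E a' w \<and> E w b'"
  using assms
proof (induction arbitrary: c rule: converse_rtranclp_induct)
  case base
  then show ?case by (simp add: independent_triple_def)
next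
  case (step y z)
  show ?case
  proof (cases "E z b \<or> E z c")
    case True
    then have "independent_triple V E y b c \<and> E y z \<and> E z b \<or>
        independent_triple V E y c b \<and> E y z \<and> E z c"
      using step.prems step.hyps(1) by (auto simp: independent_triple_def edge_sym)
    then show ?thesis by blast
  next
    case False
    then have "independent_triple V E z b c"
      using step.prems step.hyps(1) edge_in_V
      by (auto simp: independent_triple_def edge_sym)
    then show ?thesis by (rule step.IH)
  qed
qed

lemma P3_anticomplete_step:
  assumes "\<not> has_induced V E 5 P5_edge" "\<not> has_induced V E 4 C4_edge"
    "\<not> has_induced V E 4 claw_edge" "\<not> has_induced V E 5 bull_edge"
    and P3: "E a w" "E w b" "\<not> E a b" "a \<noteq> b"
    and anticomplete: "\<not> E y a" "\<not> E y w" "\<not> E y b"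
    and "E y z"
  shows "\<not> E z a \<and> \<not> E z w \<and> \<not> E z b"
proof -
  have "a \<in> V" "b \<in> V" "w \<in> V" "y \<in> V" "z \<in> V"
    using \<open>E a w\<close> \<open>E w b\<close> \<open>E y z\<close> by (simp_all add: edge_in_V)
  note vertices = \<open>a \<in> V\<close> \<open>b \<in> V\<close> \<open>w \<in> V\<close> \<open>y \<in> V\<close> \<open>z \<in> V\<close>
  note edges = P3 anticomplete \<open>E y z\<close>
  consider
    "E z w" "E z a" "E z b" | "E z w" "E z a" "\<not> E z b" | "E z w" "\<not> E z a" "E z b"
    | "E z w" "\<not> E z a" "\<not> E z b" | "\<not> E z w" "E z a" "E z b" | "\<not> E z w" "E z a" "\<not> E z b"
    | "\<not> E z w" "\<not> E z a" "E z b" | "\<not> E z w" "\<not> E z a" "\<not> E z b"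
    by blast
  then show ?thesis
  proof cases
    case 1
    have "has_induced V E 4 claw_edge"
      by (rule induced_clawI[of z y a b]) (use 1 vertices edges in \<open>auto simp: edge_sym no_loop\<close>)
    then show ?thesis using assms(3) by blast
  next
    case 2
    have "has_induced V E 5 bull_edge"
      by (rule induced_bullI[of z w a y b]) (use 2 vertices edges in \<open>auto simp: edge_sym no_loop\<close>)
    then show ?thesis using assms(4) by blast
  next
    case 3
    have "has_induced V E 5 bull_edge"
      by (rule induced_bullI[of z w b y a]) (use 3 vertices edges in \<open>auto simp: edge_sym no_loop\<close>)
    then show ?thesis using assms(4) by blast
  next
    case 4
    have "has_induced V E 4 claw_edge"
      by (rule induced_clawI[of w a b z]) (use 4 vertices edges in \<open>auto simp: edge_sym no_loop\<close>)
    then show ?thesis using assms(3) by blast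
  next
    case 5
    have "has_induced V E 4 C4_edge"
      by (rule induced_C4I[of a w b z]) (use 5 vertices edges in \<open>auto simp: edge_sym no_loop\<close>)
    then show ?thesis using assms(2) by blast
  next
    case 6
    have "has_induced V E 5 P5_edge"
      by (rule induced_P5I[of y z a w b]) (use 6 vertices edges in \<open>auto simp: edge_sym no_loop\<close>)
    then show ?thesis using assms(1) by blast
  next
    case 7
    have "has_induced V E 5 P5_edge"
      by (rule induced_P5I[of y z b w a]) (use 7 vertices edges in \<open>auto simp: edge_sym no_loop\<close>)
    then show ?thesis using assms(1) by blast
  qed simp
qed

lemma P3_anticomplete_reachable:
  assumes "\<not> has_induced V E 5 P5_edge" "\<not> has_induced V E 4 C4_edge"
    "\<not> has_induced V E 4 claw_edge" "\<not> has_induced V E 5 bull_edge"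
    and "E a w" "E w b" "\<not> E a b" "a \<noteq> b"
    and "E\<^sup>*\<^sup>* y z" and "\<not> E y a" "\<not> E y w" "\<not> E y b"
  shows "\<not> E z a \<and> \<not> E z w \<and> \<not> E z b"
  using assms(9-)
proof (induction rule: rtranclp_induct)
  case (step x z)
  then show ?case
    using P3_anticomplete_step[OF assms(1-8)] by blast
qed simp

lemma connected_forbidden_free_no_independent_triple:
  assumes "connected_graph V E"
    and "\<not> has_induced V E 5 P5_edge" "\<not> has_induced V E 4 C4_edge"
    "\<not> has_induced V E 4 claw_edge" "\<not> has_induced V E 5 bull_edge"
  shows "\<not> independent_triple V E a b c"
proof
  assume "independent_triple V E a b c"
  moreover have "E\<^sup>*\<^sup>* a b"
    using assms(1) calculation by (simp add: connected_graph_def independent_triple_def)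
  ultimately obtain a' b' c' w where triple: "independent_triple V E a' b' c'"
    and "E a' w" "E w b'"
    using independent_triple_with_common_neighbour by blast
  then have "w \<in> V"
    by (simp add: edge_in_V)
  have "\<not> E c' w"
  proof
    assume "E c' w"
    then have "has_induced V E 4 claw_edge"
      using triple \<open>w \<in> V\<close> \<open>E a' w\<close> \<open>E w b'\<close>
      by (intro induced_clawI[of w a' b' c']) (auto simp: independent_triple_def edge_sym)
    then show False
      using assms(4) by blast
  qed
  moreover have "E\<^sup>*\<^sup>* c' w"
    using assms(1) triple \<open>w \<in> V\<close> by (simp add: connected_graph_def independent_triple_def)
  ultimately have "\<not> E w a'"
    using P3_anticomplete_reachable[OF assms(2-5), of a' w b' c' w] triple \<open>E a' w\<close> \<open>E w b'\<close>
    by (auto simp: independent_triple_def edge_sym)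
  then show False
    using \<open>E a' w\<close> by (simp add: edge_sym)
qed

definition non_nbhd :: "'a \<Rightarrow> 'a set" where
  "non_nbhd u = {y \<in> V. y \<noteq> u \<and> \<not> E u y}"

lemma closed_nbhd_Un_non_nbhd: "u \<in> V \<Longrightarrow> closed_nbhd V E u \<union> non_nbhd u = V"
  by (auto simp: closed_nbhd_def non_nbhd_def)

lemma closed_nbhd_Int_non_nbhd: "closed_nbhd V E u \<inter> non_nbhd u = {}"
  by (auto simp: closed_nbhd_def non_nbhd_def)

lemma non_nbhd_clique:
  assumes "\<And>a b c. \<not> independent_triple V E a b c" and "u \<in> V"
  shows "is_clique E (non_nbhd u)"
  using assms unfolding is_clique_def non_nbhd_def independent_triple_def by blast

lemma neighbour_in_non_nbhd_if_max:
  assumes "u \<in> V" and max: "\<forall>v\<in>V. card (non_nbhd v) \<le> card (non_nbhd u)"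
    and "x \<in> closed_nbhd V E u" "x' \<in> closed_nbhd V E u" "x \<noteq> x'" "\<not> E x x'"
  shows "\<exists>y\<in>non_nbhd u. E y x"
proof (rule ccontr)
  assume "\<not> ?thesis"
  then have "insert x' (non_nbhd u) \<subseteq> non_nbhd x"
    using assms(3-) by (auto simp: non_nbhd_def closed_nbhd_def edge_sym)
  moreover have "x' \<notin> non_nbhd u"
    using assms(4) by (auto simp: non_nbhd_def closed_nbhd_def)
  ultimately have "Suc (card (non_nbhd u)) \<le> card (non_nbhd x)"
    using finite_V card_mono[of "non_nbhd x" "insert x' (non_nbhd u)"]
    by (simp add: non_nbhd_def)
  moreover have "x \<in> V"
    using assms(1,3) by (auto simp: closed_nbhd_def)
  ultimately show False
    using max by fastforce
qed

lemma closed_nbhd_clique_if_max: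
  assumes no_triple: "\<And>a b c. \<not> independent_triple V E a b c"
    and "\<not> has_induced V E 4 C4_edge" and "\<not> has_induced V E 5 C5_edge"
    and "u \<in> V" and max: "\<forall>v\<in>V. card (non_nbhd v) \<le> card (non_nbhd u)"
  shows "is_clique E (closed_nbhd V E u)"
  unfolding is_clique_def
proof (intro ballI impI, rule ccontr)
  fix x x'
  assume x: "x \<in> closed_nbhd V E u" "x' \<in> closed_nbhd V E u" "x \<noteq> x'" "\<not> E x x'"
  then have "x \<in> V" "x' \<in> V" "E u x" "E u x'"
    by (auto simp: closed_nbhd_def edge_sym)
  have sees_one: "E y x \<longleftrightarrow> \<not> E y x'" if "y \<in> non_nbhd u" for y
  proof -
    have y: "y \<in> V" "y \<noteq> u" "\<not> E u y"
      using that by (simp_all add: non_nbhd_def)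
    have "\<not> has_induced V E 4 C4_edge \<Longrightarrow> \<not> (E y x \<and> E y x')"
      using induced_C4I[of u x y x'] y x \<open>x \<in> V\<close> \<open>x' \<in> V\<close> \<open>E u x\<close> \<open>E u x'\<close> \<open>u \<in> V\<close>
      by (auto simp: edge_sym)
    moreover have "\<not> independent_triple V E y x x'"
      by (rule no_triple)
    ultimately show ?thesis
      using assms(2) y x \<open>x \<in> V\<close> \<open>x' \<in> V\<close> \<open>E u x\<close> \<open>E u x'\<close>
      by (auto simp: independent_triple_def edge_sym)
  qed
  obtain y where y: "y \<in> non_nbhd u" "E y x"
    using neighbour_in_non_nbhd_if_max[OF \<open>u \<in> V\<close> max x] by blast
  obtain y' where y': "y' \<in> non_nbhd u" "E y' x'"
    using neighbour_in_non_nbhd_if_max[OF \<open>u \<in> V\<close> max x(2,1)] x(3,4) by (auto simp: edge_sym)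
  have "\<not> E y x'" "\<not> E y' x"
    using sees_one y y' by blast+
  then have "E y y'"
    using non_nbhd_clique[OF no_triple \<open>u \<in> V\<close>] y y' unfolding is_clique_def by metis
  have "has_induced V E 5 C5_edge"
    by (rule induced_C5I[of u x y y' x'])
      (use x y y' \<open>\<not> E y x'\<close> \<open>\<not> E y' x\<close> \<open>E y y'\<close> \<open>x \<in> V\<close> \<open>x' \<in> V\<close> \<open>E u x\<close> \<open>E u x'\<close> \<open>u \<in> V\<close>
        in \<open>auto simp: non_nbhd_def edge_sym\<close>)
  then show False
    using assms(3) by blast
qed

lemma closed_nbhds_chain:
  assumes "\<not> has_induced V E 4 C4_edge" and "X \<union> Y = V" and "is_clique E X" and "is_clique E Y"
  shows "chain\<^sub>\<subseteq> (closed_nbhd V E ` X)"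
proof -
  have "closed_nbhd V E a \<subseteq> closed_nbhd V E b \<or> closed_nbhd V E b \<subseteq> closed_nbhd V E a"
    if ab: "a \<in> X" "b \<in> X" for a b
  proof (rule ccontr)
    assume "\<not> (closed_nbhd V E a \<subseteq> closed_nbhd V E b \<or> closed_nbhd V E b \<subseteq> closed_nbhd V E a)"
    then obtain y y' where y: "y \<in> closed_nbhd V E a" "y \<notin> closed_nbhd V E b"
      and y': "y' \<in> closed_nbhd V E b" "y' \<notin> closed_nbhd V E a"
      by blast
    then have "a \<noteq> b" "y \<noteq> y'"
      by auto
    then have "E a b"
      using ab assms(3) by (simp add: is_clique_def)
    have "a \<in> V" "b \<in> V"
      using ab assms(2) by auto
    have "y \<in> Y" "y' \<in> Y"
      using ab y y' \<open>a \<in> V\<close> \<open>b \<in> V\<close> assms(2,3)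
      by (auto simp: closed_nbhd_def is_clique_def)
    then have "E y y'"
      using \<open>y \<noteq> y'\<close> assms(4) by (simp add: is_clique_def)
    have "has_induced V E 4 C4_edge"
      by (rule induced_C4I[of a y y' b])
        (use y y' \<open>E a b\<close> \<open>E y y'\<close> \<open>a \<in> V\<close> \<open>b \<in> V\<close> in \<open>auto simp: closed_nbhd_def edge_sym\<close>)
    then show False
      using assms(1) by blast
  qed
  then show ?thesis
    unfolding chain_subset_def by blast
qed

lemma co_chain_if_no_independent_triple:
  assumes "\<And>a b c. \<not> independent_triple V E a b c"
    and "\<not> has_induced V E 4 C4_edge" and "\<not> has_induced V E 5 C5_edge"
  shows "co_chain V E"
proof (cases "V = {}")
  case True
  then show ?thesis
    using co_chainI[OF finite_V, of "{}" "{}"] by (simp add: is_clique_def chain_subset_def)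
next
  case False
  obtain u where "u \<in> V" and u_max: "Max ((\<lambda>v. card (non_nbhd v)) ` V) = card (non_nbhd u)"
    by (rule obtains_MAX[OF finite_V False])
  have max: "\<forall>v\<in>V. card (non_nbhd v) \<le> card (non_nbhd u)"
    unfolding u_max[symmetric] using finite_V by simp
  let ?X = "closed_nbhd V E u" and ?Y = "non_nbhd u"
  have cliques: "?X \<union> ?Y = V" "is_clique E ?X" "is_clique E ?Y"
    using closed_nbhd_Un_non_nbhd[OF \<open>u \<in> V\<close>] closed_nbhd_clique_if_max[OF assms \<open>u \<in> V\<close> max]
      non_nbhd_clique[OF assms(1) \<open>u \<in> V\<close>]
    by simp_all
  show ?thesis
    by (rule co_chainI[OF finite_V cliques(1) closed_nbhd_Int_non_nbhd cliques(2,3)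
          closed_nbhds_chain[OF assms(2) cliques]])
qed

end

theorem theorem16:
  fixes V :: "'a set" and E :: "'a \<Rightarrow> 'a \<Rightarrow> bool"
  assumes "graph V E" and "connected_graph V E"
  shows "(\<not> has_induced V E 5 P5_edge \<and> \<not> has_induced V E 4 C4_edge \<and>
          \<not> has_induced V E 5 C5_edge \<and> \<not> has_induced V E 4 claw_edge \<and>
          \<not> has_induced V E 5 bull_edge) \<longleftrightarrow> co_chain V E"
proof -
  interpret finite_simple_graph V E
    by unfold_locales (rule assms(1))
  show ?thesis
  proof
    assume forbidden_free: "\<not> has_induced V E 5 P5_edge \<and> \<not> has_induced V E 4 C4_edge \<and>
      \<not> has_induced V E 5 C5_edge \<and> \<not> has_induced V E 4 claw_edge \<and>
      \<not> has_induced V E 5 bull_edge"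
    then have "\<not> independent_triple V E a b c" for a b c
      using connected_forbidden_free_no_independent_triple[OF assms(2)] by simp
    then show "co_chain V E"
      using co_chain_if_no_independent_triple forbidden_free by simp
  qed (rule co_chain_forbidden_free)
qed

end
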